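(* Let $n\ge1$, $\omega\ge1$, and let $\mathcal{R}_\omega(\mathcal{C}^*_{n,A})$ be the set of regions of $\mathcal{C}^*_{n,A}$ of level $\omega$. For $\Omega\in\mathcal{R}_\omega(\mathcal{C}^*_{n,A})$, the graph $G_1(\Omega)$ has exactly $\omega$ connected components, which can be uniquely listed as $D_1,\dots,D_\omega$ so that $x_j-x_i>a_1$ whenever $i\in D_u$, $j\in D_v$, $u<v$ (for any $\bm x\in\Omega$); let $\Omega_j$ be the region of $\mathcal{C}^*_{D_j,A}$ containing the restriction $(x_i)_{i\in D_j}$. Then $\phi_\omega(\Omega)=(\Omega_1,\dots,\Omega_\omega)$ is independent of $\bm x\in\Omega$, each $\Omega_j$ has level 1, and \[\phi_\omega:\mathcal{R}_\omega(\mathcal{C}^*_{n,A})\longrightarrow\bigsqcup_{(D_1,\dots,D_\omega)}\mathcal{R}_1(\mathcal{C}^*_{D_1,A})\times\cdots\times\mathcal{R}_1(\mathcal{C}^*_{D_\omega,A})\] is a bijection, where the union is over all ordered set partitions $(D_1,\dots,D_\omega)$ of $[n]$ into $\omega$ nonempty blocks.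
   Context: Let $A=\{a_1,\dots,a_m\}$ with $a_1>\dots>a_m>0$. For a finite nonempty set $S$, $\mathcal{C}^*_{S,A}$ is the arrangement in $\mathbb{R}^S$ of hyperplanes $x_i-x_j=a_k$ ($i\ne j\in S$, $1\le k\le m$), and $\mathcal{C}^*_{n,A}=\mathcal{C}^*_{[n],A}$; for $|S|=1$ it is empty with unique region $\mathbb{R}^S$ of level 1. Regions are connected components of the complement; $\mathcal{R}_1(\cdot)$ denotes the set of regions of level 1. The level of $X\subseteq\mathbb{R}^S$ is the smallest integer $\ell\ge0$ such that there are a linear subspace $W$ of dimension $\ell$ and $r>0$ with $X\subseteq\{\bm x:\min_{\bm y\in W}\|\bm x-\bm y\|\le r\}$. $G_1(\Omega)$ is the graph on $[n]$ with $\{i,j\}$ an edge iff $|x_i-x_j|<a_1$ for $\bm x\in\Omega$. *)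

theory Defs
  imports "HOL-Analysis.Analysis"
begin

text \<open>Points of R^S (S a finite set of nat indices) are functions nat => real vanishing
outside S. The topology is the product topology on nat => real (Function_Topology),
which on this finite-dimensional coordinate subspace is the Euclidean topology.\<close>

definition carrierS :: "nat set \<Rightarrow> (nat \<Rightarrow> real) set" where
  "carrierS S = {x. \<forall>i. i \<notin> S \<longrightarrow> x i = 0}"

definition cmpl :: "real set \<Rightarrow> nat set \<Rightarrow> (nat \<Rightarrow> real) set" where
  "cmpl A S = {x \<in> carrierS S. \<forall>i\<in>S. \<forall>j\<in>S. \<forall>a\<in>A. i \<noteq> j \<longrightarrow> x i - x j \<noteq> a}"

definition regions :: "real set \<Rightarrow> nat set \<Rightarrow> (nat \<Rightarrow> real) set set" where
  "regions A S = {connected_component_set (cmpl A S) x | x. x \<in> cmpl A S}"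

definition distS :: "nat set \<Rightarrow> (nat \<Rightarrow> real) \<Rightarrow> (nat \<Rightarrow> real) \<Rightarrow> real" where
  "distS S x y = sqrt (\<Sum>i\<in>S. (x i - y i)^2)"

text \<open>Level: least l such that X lies within bounded distance of a linear subspace W of R^S
of dimension l; W is written as the span of l linearly independent vectors v 0,...,v (l-1)
of R^S. Since W is closed, "min over y in W of dist <= r" is "some y in W has dist <= r".\<close>
definition level :: "nat set \<Rightarrow> (nat \<Rightarrow> real) set \<Rightarrow> nat" where
  "level S X = (LEAST l. \<exists>v :: nat \<Rightarrow> nat \<Rightarrow> real.
      (\<forall>k<l. v k \<in> carrierS S) \<and>
      (\<forall>c :: nat \<Rightarrow> real. (\<forall>i\<in>S. (\<Sum>k<l. c k * v k i) = 0) \<longrightarrow> (\<forall>k<l. c k = 0)) \<and>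
      (\<exists>r>0. \<forall>x\<in>X. \<exists>c :: nat \<Rightarrow> real. distS S x (\<lambda>i. \<Sum>k<l. c k * v k i) \<le> r))"

definition regions_level :: "real set \<Rightarrow> nat set \<Rightarrow> nat \<Rightarrow> (nat \<Rightarrow> real) set set" where
  "regions_level A S l = {R \<in> regions A S. level S R = l}"

definition a1 :: "real set \<Rightarrow> real" where
  "a1 A = Max A"

definition G1_edge :: "real set \<Rightarrow> nat \<Rightarrow> (nat \<Rightarrow> real) set \<Rightarrow> nat \<Rightarrow> nat \<Rightarrow> bool" where
  "G1_edge A n \<Omega> i j \<longleftrightarrow> i \<in> {1..n} \<and> j \<in> {1..n} \<and> i \<noteq> j \<and>
      (\<forall>x\<in>\<Omega>. \<bar>x i - x j\<bar> < a1 A)"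

definition G1_components :: "real set \<Rightarrow> nat \<Rightarrow> (nat \<Rightarrow> real) set \<Rightarrow> nat set set" where
  "G1_components A n \<Omega> = {{j \<in> {1..n}. (G1_edge A n \<Omega>)\<^sup>*\<^sup>* i j} | i. i \<in> {1..n}}"

definition good_order :: "real set \<Rightarrow> nat \<Rightarrow> (nat \<Rightarrow> real) set \<Rightarrow> nat set list \<Rightarrow> bool" where
  "good_order A n \<Omega> Ds \<longleftrightarrow> set Ds = G1_components A n \<Omega> \<and> distinct Ds \<and>
     (\<forall>u v. u < v \<and> v < length Ds \<longrightarrow>
        (\<forall>i\<in>Ds!u. \<forall>j\<in>Ds!v. \<forall>x\<in>\<Omega>. x j - x i > a1 A))"

definition restr :: "(nat \<Rightarrow> real) \<Rightarrow> nat set \<Rightarrow> nat \<Rightarrow> real" where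
  "restr x D = (\<lambda>i. if i \<in> D then x i else 0)"

definition phi :: "real set \<Rightarrow> nat \<Rightarrow> (nat \<Rightarrow> real) set \<Rightarrow> nat set list \<times> (nat \<Rightarrow> real) set list" where
  "phi A n \<Omega> = (let Ds = (THE Ds. good_order A n \<Omega> Ds); x = (SOME x. x \<in> \<Omega>) in
      (Ds, map (\<lambda>D. connected_component_set (cmpl A D) (restr x D)) Ds))"

definition ordered_partition :: "nat \<Rightarrow> nat \<Rightarrow> nat set list \<Rightarrow> bool" where
  "ordered_partition n \<omega> Ds \<longleftrightarrow> length Ds = \<omega> \<and> (\<forall>j<\<omega>. Ds!j \<noteq> {}) \<and>
     (\<forall>u<\<omega>. \<forall>v<\<omega>. u \<noteq> v \<longrightarrow> Ds!u \<inter> Ds!v = {}) \<and> \<Union>(set Ds) = {1..n}"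

definition target :: "real set \<Rightarrow> nat \<Rightarrow> nat \<Rightarrow> (nat set list \<times> (nat \<Rightarrow> real) set list) set" where
  "target A n \<omega> = {(Ds, Rs). ordered_partition n \<omega> Ds \<and> length Rs = \<omega> \<and>
      (\<forall>j<\<omega>. Rs!j \<in> regions_level A (Ds!j) 1)}"

end

theory Submission
  imports Defs
begin

text \<open>
  A region of the arrangement is the set of points of the complement with a fixed pattern of
  signs of \<open>x\<^sub>i - x\<^sub>j - a\<close>: such a set is path connected, and a connected subset of the
  complement cannot change a sign.  On a region \<open>\<Omega>\<close> the graph \<open>G\<^sub>1\<close> is determined by any
  point \<open>x\<close>: coordinates in one component stay within bounded distance of each other on all of
  \<open>\<Omega>\<close>, while distinct components are more than \<open>a\<^sub>1\<close> apart and hence linearly ordered.  Lifting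
  the components upwards, each by at least as much as the ones below it, never leaves \<open>\<Omega>\<close>, so
  \<open>\<Omega>\<close> stays near the space of vectors constant on components and contains a translated cone
  spanning it; hence the level of \<open>\<Omega>\<close> is the number of components.  Restricting to a component
  gives a region of level 1, and conversely regions of the blocks of an ordered partition can be
  stacked far apart to rebuild the region, which makes \<open>\<phi>\<close> a bijection.
\<close>

section \<open>Regions as sign cells\<close>

definition cell :: "real set \<Rightarrow> nat set \<Rightarrow> (nat \<Rightarrow> real) \<Rightarrow> (nat \<Rightarrow> real) set" where
  "cell A S x = {y \<in> cmpl A S. \<forall>i\<in>S. \<forall>j\<in>S. \<forall>a\<in>A. i \<noteq> j \<longrightarrow> (y i - y j < a \<longleftrightarrow> x i - x j < a)}"

lemma cmpl_neq: "x \<in> cmpl A S \<Longrightarrow> i \<in> S \<Longrightarrow> j \<in> S \<Longrightarrow> i \<noteq> j \<Longrightarrow> a \<in> A \<Longrightarrow> x i - x j \<noteq> a"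
  unfolding cmpl_def by auto

lemma cell_self: "x \<in> cmpl A S \<Longrightarrow> x \<in> cell A S x"
  unfolding cell_def by auto

lemma cell_eq: "y \<in> cell A S x \<Longrightarrow> cell A S y = cell A S x"
  unfolding cell_def by auto

lemma cell_gt_iff:
  assumes y: "y \<in> cell A S x" and x: "x \<in> cmpl A S"
    and "i \<in> S" "j \<in> S" "i \<noteq> j" "a \<in> A"
  shows "a < y i - y j \<longleftrightarrow> a < x i - x j"
proof -
  have "y i - y j < a \<longleftrightarrow> x i - x j < a" using assms unfolding cell_def by auto
  moreover have "y i - y j \<noteq> a" "x i - x j \<noteq> a"
    using assms cmpl_neq unfolding cell_def by blast+
  ultimately show ?thesis by linarith
qed

lemma convex_combination_same_side:
  fixes p q a t :: real
  assumes t: "0 \<le> t" "t \<le> 1" and side: "p < a \<longleftrightarrow> q < a" and "p \<noteq> a" "q \<noteq> a"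
  shows "(1 - t) * p + t * q < a \<longleftrightarrow> p < a" and "(1 - t) * p + t * q \<noteq> a"
proof -
  have "(1 - t) * p + t * q < a" if "p < a" "q < a"
    using convex_bound_lt[OF that] t by simp
  moreover have "a < (1 - t) * p + t * q" if "a < p" "a < q"
    using convex_bound_lt[of "- p" "- a" "- q" "1 - t" t] that t by simp
  ultimately show "(1 - t) * p + t * q < a \<longleftrightarrow> p < a" "(1 - t) * p + t * q \<noteq> a"
    using side assms(4,5) by (metis linorder_neqE_linordered_idom order_less_irrefl order_less_trans)+
qed

lemma path_connected_cell: "path_connected (cell A S x)"
  unfolding path_connected_def
proof (intro ballI)
  fix y z assume y: "y \<in> cell A S x" and z: "z \<in> cell A S x"
  define g where "g = (\<lambda>t::real. \<lambda>i. (1 - t) * y i + t * z i)"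
  have "path g"
    unfolding path_def g_def by (intro continuous_on_coordinatewise_then_product continuous_intros)
  moreover have "g t \<in> cell A S x" if t: "0 \<le> t" "t \<le> 1" for t
  proof -
    have yz: "y \<in> cmpl A S" "z \<in> cmpl A S" using y z unfolding cell_def by auto
    have diff: "g t i - g t j = (1 - t) * (y i - y j) + t * (z i - z j)" for i j
      unfolding g_def by (simp add: algebra_simps)
    have "(g t i - g t j < a \<longleftrightarrow> x i - x j < a) \<and> g t i - g t j \<noteq> a"
      if "i \<in> S" "j \<in> S" "a \<in> A" "i \<noteq> j" for i j a
    proof -
      have "y i - y j \<noteq> a" "z i - z j \<noteq> a"
        using cmpl_neq[OF yz(1) that(1,2,4,3)] cmpl_neq[OF yz(2) that(1,2,4,3)] by auto
      moreover have "y i - y j < a \<longleftrightarrow> x i - x j < a" "z i - z j < a \<longleftrightarrow> x i - x j < a"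
        using y z that unfolding cell_def by auto
      ultimately show ?thesis
        using convex_combination_same_side[OF t, of "y i - y j" a "z i - z j"] unfolding diff by simp
    qed
    moreover have "g t \<in> carrierS S"
      using y z unfolding g_def cell_def cmpl_def carrierS_def by auto
    ultimately show ?thesis
      unfolding cell_def cmpl_def by auto
  qed
  moreover have "pathstart g = y" "pathfinish g = z"
    unfolding pathstart_def pathfinish_def g_def by auto
  ultimately show "\<exists>g. path g \<and> path_image g \<subseteq> cell A S x \<and> pathstart g = y \<and> pathfinish g = z"
    unfolding path_image_def by fastforce
qed

text \<open>A connected subset of the complement cannot meet both sides of a hyperplane, since the
  continuous image of the coordinate difference is an interval missing the value on it.\<close>

lemma connected_component_cmpl:
  assumes x: "x \<in> cmpl A S"
  shows "connected_component_set (cmpl A S) x = cell A S x"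
proof
  show "cell A S x \<subseteq> connected_component_set (cmpl A S) x"
    using cell_self[OF x] path_connected_imp_connected[OF path_connected_cell]
    by (intro connected_component_maximal) (auto simp: cell_def)
next
  let ?C = "connected_component_set (cmpl A S) x"
  have sub: "?C \<subseteq> cmpl A S" by (rule connected_component_subset)
  have "y i - y j < a \<longleftrightarrow> x i - x j < a"
    if y: "y \<in> ?C" and ij: "i \<in> S" "j \<in> S" "a \<in> A" "i \<noteq> j" for y i j a
  proof -
    have "continuous_on ?C (\<lambda>y. y i - y j)"
      by (intro continuous_intros continuous_on_product_then_coordinatewise continuous_on_id)
    then have conn: "connected ((\<lambda>y. y i - y j) ` ?C)"
      by (rule connected_continuous_image) (rule connected_connected_component)
    have "y i - y j \<in> (\<lambda>y. y i - y j) ` ?C" "x i - x j \<in> (\<lambda>y. y i - y j) ` ?C"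
      using y x by auto
    moreover have "a \<notin> (\<lambda>y. y i - y j) ` ?C"
      using sub ij cmpl_neq by fastforce
    ultimately show ?thesis
      using connectedD_interval[OF conn] by (meson linorder_not_le order_less_imp_le)
  qed
  then show "?C \<subseteq> cell A S x"
    using sub unfolding cell_def by auto
qed

lemma regions_eq_cells: "regions A S = {cell A S x | x. x \<in> cmpl A S}"
  unfolding regions_def using connected_component_cmpl by blast

lemma restr_cmpl: "x \<in> cmpl A S \<Longrightarrow> D \<subseteq> S \<Longrightarrow> restr x D \<in> cmpl A D"
  unfolding cmpl_def carrierS_def restr_def by (auto simp: subset_iff)

lemma restr_cell: "y \<in> cell A S x \<Longrightarrow> D \<subseteq> S \<Longrightarrow> restr y D \<in> cell A D (restr x D)"
  unfolding cell_def using restr_cmpl by (auto simp: restr_def subset_iff)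

section \<open>Computing the level\<close>

definition coord_independent :: "nat set \<Rightarrow> nat \<Rightarrow> (nat \<Rightarrow> nat \<Rightarrow> real) \<Rightarrow> bool" where
  "coord_independent S l v \<longleftrightarrow>
     (\<forall>c. (\<forall>i\<in>S. (\<Sum>k<l. c k * v k i) = 0) \<longrightarrow> (\<forall>k<l. c k = 0))"

definition near_subspace :: "nat set \<Rightarrow> (nat \<Rightarrow> real) set \<Rightarrow> nat \<Rightarrow> bool" where
  "near_subspace S X l \<longleftrightarrow> (\<exists>v. (\<forall>k<l. v k \<in> carrierS S) \<and> coord_independent S l v \<and>
     (\<exists>r>0. \<forall>x\<in>X. \<exists>c. distS S x (\<lambda>i. \<Sum>k<l. c k * v k i) \<le> r))"

lemma level_eq_Least: "level S X = (LEAST l. near_subspace S X l)"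
  unfolding level_def near_subspace_def coord_independent_def ..

lemma homogeneous_system_nontrivial_solution:
  fixes a :: "nat \<Rightarrow> nat \<Rightarrow> real"
  assumes "finite U" and "l < card U"
  shows "\<exists>\<beta>. (\<exists>u\<in>U. \<beta> u \<noteq> 0) \<and> (\<forall>m<l. (\<Sum>u\<in>U. a m u * \<beta> u) = 0)"
  using assms
proof (induction l arbitrary: U a)
  case 0
  then obtain u where "u \<in> U" by (metis card.empty card_gt_0_iff ex_in_conv)
  then show ?case by (intro exI[of _ "\<lambda>_. 1"]) auto
next
  case (Suc l)
  show ?case
  proof (cases "\<forall>u\<in>U. a l u = 0")
    case True
    obtain \<beta> where \<beta>: "\<exists>u\<in>U. \<beta> u \<noteq> 0" "\<forall>m<l. (\<Sum>u\<in>U. a m u * \<beta> u) = 0"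
      using Suc by force
    moreover have "(\<Sum>u\<in>U. a l u * \<beta> u) = 0" using True by simp
    ultimately show ?thesis by (auto simp: less_Suc_eq)
  next
    case False
    then obtain p where p: "p \<in> U" "a l p \<noteq> 0" by auto
    define U' where "U' = U - {p}"
    have U': "finite U'" "l < card U'" using Suc.prems p unfolding U'_def by auto
    txt \<open>Gaussian elimination of the unknown at \<open>p\<close> using equation \<open>l\<close>.\<close>
    define b where "b = (\<lambda>m u. a m u - a l u / a l p * a m p)"
    obtain \<gamma> where \<gamma>: "\<exists>u\<in>U'. \<gamma> u \<noteq> 0" "\<forall>m<l. (\<Sum>u\<in>U'. b m u * \<gamma> u) = 0"
      using Suc.IH[OF U'] by blast
    define s where "s = (\<Sum>u\<in>U'. a l u * \<gamma> u)"
    define \<beta> where "\<beta> = (\<lambda>u. if u = p then - s / a l p else \<gamma> u)"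
    have split: "(\<Sum>u\<in>U. a m u * \<beta> u) = - a m p / a l p * s + (\<Sum>u\<in>U'. a m u * \<gamma> u)" for m
      using Suc.prems(1) p unfolding U'_def \<beta>_def by (simp add: sum.remove)
    have "(\<Sum>u\<in>U. a m u * \<beta> u) = 0" if "m < Suc l" for m
    proof (cases "m = l")
      case True
      then show ?thesis using p(2) unfolding split s_def by simp
    next
      case False
      have "a m u * \<gamma> u = b m u * \<gamma> u + a m p / a l p * (a l u * \<gamma> u)" for u
        unfolding b_def by (simp add: algebra_simps)
      then have "(\<Sum>u\<in>U'. a m u * \<gamma> u) = (\<Sum>u\<in>U'. b m u * \<gamma> u) + a m p / a l p * s"
        unfolding s_def by (simp add: sum.distrib sum_distrib_left)
      then show ?thesis using \<gamma>(2) False that unfolding split by simp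
    qed
    moreover have "\<exists>u\<in>U. \<beta> u \<noteq> 0"
      using \<gamma>(1) unfolding \<beta>_def U'_def by (metis Diff_iff singletonI)
    ultimately show ?thesis by blast
  qed
qed

lemma orthogonal_near_bound:
  assumes orth: "\<forall>m<l. (\<Sum>i\<in>S. z i * v m i) = 0"
    and near: "distS S x (\<lambda>i. \<Sum>m<l. c m * v m i) \<le> r"
  shows "\<bar>\<Sum>i\<in>S. x i * z i\<bar> \<le> r * L2_set z S"
proof -
  define p where "p = (\<lambda>i. \<Sum>m<l. c m * v m i)"
  have "(\<Sum>i\<in>S. z i * p i) = (\<Sum>m<l. c m * (\<Sum>i\<in>S. z i * v m i))"
    unfolding p_def by (simp add: sum_distrib_left sum.swap[of _ S] algebra_simps)
  also have "\<dots> = 0" using orth by simp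
  finally have "(\<Sum>i\<in>S. x i * z i) = (\<Sum>i\<in>S. (x i - p i) * z i)"
    by (simp add: sum_subtractf algebra_simps)
  also have "\<bar>\<dots>\<bar> \<le> (\<Sum>i\<in>S. \<bar>x i - p i\<bar> * \<bar>z i\<bar>)"
    by (rule order_trans[OF sum_abs]) (simp add: abs_mult)
  also have "\<dots> \<le> L2_set (\<lambda>i. x i - p i) S * L2_set z S"
    by (rule L2_set_mult_ineq)
  also have "\<dots> \<le> r * L2_set z S"
    using near by (intro mult_right_mono L2_set_nonneg) (auto simp: p_def distS_def L2_set_def)
  finally show ?thesis .
qed

lemma exists_orthogonal_combination:
  assumes w: "coord_independent S k w" and lk: "l < k"
  obtains \<beta> where "\<exists>i\<in>S. (\<Sum>u<k. \<beta> u * w u i) \<noteq> 0"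
    and "\<forall>m<l. (\<Sum>i\<in>S. (\<Sum>u<k. \<beta> u * w u i) * v m i) = 0"
proof -
  obtain \<beta> where \<beta>: "\<exists>u\<in>{..<k}. \<beta> u \<noteq> 0"
    and \<beta>_sol: "\<forall>m<l. (\<Sum>u\<in>{..<k}. (\<Sum>i\<in>S. w u i * v m i) * \<beta> u) = 0"
    using homogeneous_system_nontrivial_solution[of "{..<k}" l "\<lambda>m u. \<Sum>i\<in>S. w u i * v m i"] lk
    by auto
  have "(\<Sum>i\<in>S. (\<Sum>u<k. \<beta> u * w u i) * v m i) = 0" if "m < l" for m
  proof -
    have "(\<Sum>i\<in>S. (\<Sum>u<k. \<beta> u * w u i) * v m i) = (\<Sum>i\<in>S. \<Sum>u<k. \<beta> u * (w u i * v m i))"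
      by (simp add: sum_distrib_right mult.assoc)
    also have "\<dots> = (\<Sum>u<k. (\<Sum>i\<in>S. w u i * v m i) * \<beta> u)"
      by (subst sum.swap) (simp add: sum_distrib_left mult.commute)
    finally show ?thesis using \<beta>_sol that by simp
  qed
  moreover have "\<exists>i\<in>S. (\<Sum>u<k. \<beta> u * w u i) \<noteq> 0"
    using w \<beta> unfolding coord_independent_def by blast
  ultimately show ?thesis using that by blast
qed

lemma cone_difference:
  fixes \<beta> :: "nat \<Rightarrow> real"
  assumes cone: "\<forall>t. (\<forall>u. 0 \<le> t u) \<longrightarrow> (\<lambda>i. if i \<in> S then x0 i + (\<Sum>u<k. t u * w u i) else 0) \<in> X"
  shows "\<exists>p\<in>X. \<exists>q\<in>X. \<forall>i\<in>S. p i - q i = (\<Sum>u<k. \<beta> u * w u i)"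
proof -
  define y where "y = (\<lambda>t i. if i \<in> S then x0 i + (\<Sum>u<k. t u * w u i) else (0::real))"
  define tp where "tp = (\<lambda>u. max (\<beta> u) 0)"
  define tm where "tm = (\<lambda>u. max (- \<beta> u) 0)"
  have "y tp \<in> X" "y tm \<in> X"
    using cone unfolding y_def tp_def tm_def by auto
  moreover have "y tp i - y tm i = (\<Sum>u<k. \<beta> u * w u i)" if "i \<in> S" for i
  proof -
    have "y tp i - y tm i = (\<Sum>u<k. (tp u - tm u) * w u i)"
      using that unfolding y_def by (simp add: sum_subtractf[symmetric] left_diff_distrib)
    moreover have "tp u - tm u = \<beta> u" for u
      unfolding tp_def tm_def by (simp add: max_def)
    ultimately show ?thesis by simp
  qed
  ultimately show ?thesis by blast
qed

text \<open>If \<open>X\<close> stays near an \<open>l\<close>-dimensional subspace \<open>W\<close> but contains a translated cone over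
  \<open>k > l\<close> independent vectors, some nonzero \<open>z\<close> in their span is orthogonal to \<open>W\<close>; the inner
  product with \<open>z\<close> is then bounded on \<open>X\<close>, yet unbounded along the cone.\<close>

lemma near_subspace_cone_le:
  assumes fin: "finite S" and w: "coord_independent S k w"
    and cone: "\<forall>t. (\<forall>u. 0 \<le> t u) \<longrightarrow> (\<lambda>i. if i \<in> S then x0 i + (\<Sum>u<k. t u * w u i) else 0) \<in> X"
    and near: "near_subspace S X l"
  shows "k \<le> l"
proof (rule ccontr)
  assume "\<not> k \<le> l"
  then have lk: "l < k" by simp
  obtain v r where r: "r > 0" and v: "\<forall>x\<in>X. \<exists>c. distS S x (\<lambda>i. \<Sum>m<l. c m * v m i) \<le> r"
    using near unfolding near_subspace_def by blast
  obtain \<beta> where nonzero: "\<exists>i\<in>S. (\<Sum>u<k. \<beta> u * w u i) \<noteq> 0"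
    and orth: "\<forall>m<l. (\<Sum>i\<in>S. (\<Sum>u<k. \<beta> u * w u i) * v m i) = 0"
    by (rule exists_orthogonal_combination[OF w lk])
  define z where "z = (\<lambda>i. \<Sum>u<k. \<beta> u * w u i)"
  have orth_z: "\<forall>m<l. (\<Sum>i\<in>S. z i * v m i) = 0" using orth unfolding z_def .
  obtain i0 where "i0 \<in> S" "z i0 \<noteq> 0" using nonzero unfolding z_def by blast
  then have "(\<Sum>i\<in>S. (z i)\<^sup>2) > 0"
    using fin by (intro sum_pos2[of S i0]) auto
  then have N: "L2_set z S > 0" unfolding L2_set_def by simp
  have N_sq: "(\<Sum>i\<in>S. (z i)\<^sup>2) = L2_set z S * L2_set z S"
    unfolding L2_set_def by (simp add: sum_nonneg)
  define M where "M = 2 * r / L2_set z S + 1"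
  obtain p q where pq: "p \<in> X" "q \<in> X"
    and "\<forall>i\<in>S. p i - q i = (\<Sum>u<k. M * \<beta> u * w u i)"
    using cone_difference[OF cone, of "\<lambda>u. M * \<beta> u"] by blast
  then have diff: "p i - q i = M * z i" if "i \<in> S" for i
    using that unfolding z_def by (simp add: sum_distrib_left mult.assoc)
  have "(\<Sum>i\<in>S. p i * z i) - (\<Sum>i\<in>S. q i * z i) = (\<Sum>i\<in>S. (p i - q i) * z i)"
    by (simp add: sum_subtractf[symmetric] left_diff_distrib)
  also have "\<dots> = M * (L2_set z S * L2_set z S)"
    using diff by (simp add: sum_distrib_left power2_eq_square mult.assoc N_sq[symmetric])
  finally have diff_sum: "(\<Sum>i\<in>S. p i * z i) - (\<Sum>i\<in>S. q i * z i) = M * (L2_set z S * L2_set z S)" .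
  have bound: "\<bar>\<Sum>i\<in>S. y i * z i\<bar> \<le> r * L2_set z S" if y: "y \<in> X" for y
  proof -
    obtain c where "distS S y (\<lambda>i. \<Sum>m<l. c m * v m i) \<le> r" using v y by blast
    then show ?thesis by (rule orthogonal_near_bound[OF orth_z])
  qed
  have "M * (L2_set z S * L2_set z S) \<le> 2 * (r * L2_set z S)"
    using diff_sum bound[OF pq(1)] bound[OF pq(2)] unfolding abs_le_iff by linarith
  then have "M * L2_set z S \<le> 2 * r" using N by (simp add: mult.assoc[symmetric])
  then have "M \<le> 2 * r / L2_set z S" using N by (simp add: pos_le_divide_eq)
  then show False unfolding M_def by simp
qed

lemma prefix_vectors_independent:
  assumes "blk ` S = {..<k}"
  shows "coord_independent S k (\<lambda>u i. if u \<le> blk i then 1 else 0)"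
  unfolding coord_independent_def
proof (intro allI impI)
  fix c :: "nat \<Rightarrow> real" and u
  assume c: "\<forall>i\<in>S. (\<Sum>u<k. c u * (if u \<le> blk i then 1 else 0)) = 0" and "u < k"
  have prefix: "(\<Sum>v\<le>b. c v) = 0" if "b < k" for b
  proof -
    have "b \<in> blk ` S" using assms that by simp
    then obtain i where i: "i \<in> S" "blk i = b" by blast
    have "0 = (\<Sum>u<k. c u * (if u \<le> b then 1 else 0))"
      using c i by force
    also have "\<dots> = (\<Sum>v\<in>{..<k}. if v \<in> {..b} then c v else 0)"
      by (intro sum.cong) auto
    also have "\<dots> = sum c ({..<k} \<inter> {..b})"
      by (simp add: sum.inter_restrict)
    also have "{..<k} \<inter> {..b} = {..b}"
      using that by auto
    finally show ?thesis by simp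
  qed
  show "c u = 0"
  proof (cases u)
    case 0 then show ?thesis using prefix[of 0] \<open>u < k\<close> by simp
  next
    case (Suc b) then show ?thesis using prefix[of b] prefix[of u] \<open>u < k\<close> by simp
  qed
qed

lemma near_subspace_blocks:
  assumes fin: "finite S" and blk: "blk ` S = {..<k}"
    and spread: "\<forall>x\<in>X. \<forall>i\<in>S. \<forall>j\<in>S. blk i = blk j \<longrightarrow> \<bar>x i - x j\<bar> \<le> B"
  shows "near_subspace S X k"
proof -
  define v where "v = (\<lambda>u i. if i \<in> S \<and> blk i = u then 1 else (0::real))"
  have v_comb: "(\<Sum>u<k. c u * v u i) = c (blk i)" if "i \<in> S" for c i
  proof -
    have "(\<Sum>u<k. c u * v u i) = (\<Sum>u<k. if u = blk i then c u else 0)"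
      using that unfolding v_def by (intro sum.cong) auto
    then show ?thesis using that blk by auto
  qed
  define rep where "rep = inv_into S blk"
  have rep: "rep (blk i) \<in> S" "blk (rep (blk i)) = blk i" if "i \<in> S" for i
    using that unfolding rep_def by (auto intro: inv_into_into f_inv_into_f)
  have "coord_independent S k v"
    unfolding coord_independent_def
  proof (intro allI impI)
    fix c u assume c: "\<forall>i\<in>S. (\<Sum>u<k. c u * v u i) = 0" and "u < k"
    then obtain i where "i \<in> S" "blk i = u" using blk by (metis imageE lessThan_iff)
    then show "c u = 0" using c v_comb by metis
  qed
  moreover have "\<forall>u<k. v u \<in> carrierS S"
    unfolding v_def carrierS_def by simp
  moreover define r where "r = sqrt (real (card S) * B\<^sup>2) + 1"
  moreover have "\<exists>c. distS S x (\<lambda>i. \<Sum>u<k. c u * v u i) \<le> r" if x: "x \<in> X" for x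
  proof -
    have "distS S x (\<lambda>i. \<Sum>u<k. x (rep u) * v u i) = sqrt (\<Sum>i\<in>S. (x i - x (rep (blk i)))\<^sup>2)"
      unfolding distS_def by (simp add: v_comb)
    also have "\<dots> \<le> sqrt (\<Sum>i\<in>S. B\<^sup>2)"
    proof (intro real_sqrt_le_mono sum_mono)
      fix i assume i: "i \<in> S"
      then have "\<bar>x i - x (rep (blk i))\<bar> \<le> B"
        using spread x rep[OF i] by simp
      then show "(x i - x (rep (blk i)))\<^sup>2 \<le> B\<^sup>2"
        by (metis abs_ge_zero power2_abs power_mono)
    qed
    also have "\<dots> \<le> r" unfolding r_def by simp
    finally show ?thesis by (intro exI[of _ "\<lambda>u. x (rep u)"])
  qed
  moreover have "r > 0" unfolding r_def by (simp add: add_nonneg_pos)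
  ultimately show ?thesis
    unfolding near_subspace_def by blast
qed

lemma level_eq_blocks:
  assumes fin: "finite S" and blk: "blk ` S = {..<k}"
    and spread: "\<forall>x\<in>X. \<forall>i\<in>S. \<forall>j\<in>S. blk i = blk j \<longrightarrow> \<bar>x i - x j\<bar> \<le> B"
    and cone: "\<forall>t. (\<forall>u. 0 \<le> t u) \<longrightarrow>
      (\<lambda>i. if i \<in> S then x0 i + (\<Sum>u<k. t u * (if u \<le> blk i then 1 else 0)) else 0) \<in> X"
  shows "level S X = k"
  unfolding level_eq_Least
  using near_subspace_blocks[OF fin blk spread]
    near_subspace_cone_le[OF fin prefix_vectors_independent[OF blk] cone]
  by (intro Least_equality) auto

section \<open>Ordered set partitions\<close>

lemma ex1_sorted_wrt_enumeration:
  fixes f :: "'a \<Rightarrow> 'b::linorder"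
  assumes fin: "finite K"
    and total: "\<And>C D. C \<in> K \<Longrightarrow> D \<in> K \<Longrightarrow> C \<noteq> D \<Longrightarrow> R C D \<or> R D C"
    and mono: "\<And>C D. C \<in> K \<Longrightarrow> D \<in> K \<Longrightarrow> R C D \<Longrightarrow> f C < f D"
  shows "\<exists>!xs. set xs = K \<and> distinct xs \<and> sorted_wrt R xs"
proof -
  have inj: "inj_on f K"
    by (rule inj_onI) (metis total mono less_irrefl)
  have sorted_iff: "sorted_wrt R xs \<longleftrightarrow> sorted_wrt (<) (map f xs)" if "set xs = K" for xs
    unfolding sorted_wrt_map
  proof
    show "sorted_wrt R xs \<Longrightarrow> sorted_wrt (\<lambda>C D. f C < f D) xs"
      by (erule sorted_wrt_mono_rel[rotated]) (use mono that in blast)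
    show "sorted_wrt (\<lambda>C D. f C < f D) xs \<Longrightarrow> sorted_wrt R xs"
      by (erule sorted_wrt_mono_rel[rotated]) (use total mono that in fastforce)
  qed
  obtain L where L: "sorted_wrt (<) L" "set L = f ` K"
    using ex1_sorted_list_for_set_if_finite[of "f ` K"] fin by blast
  let ?xs = "map (inv_into K f) L"
  have "map f ?xs = L"
    unfolding map_map by (rule map_idI) (simp add: L(2) f_inv_into_f)
  moreover have "set ?xs = K"
    using L(2) inv_into_image_cancel[OF inj] by simp
  ultimately have "set ?xs = K \<and> distinct ?xs \<and> sorted_wrt R ?xs"
    using sorted_iff L(1) strict_sorted_iff[of L] by (metis distinct_map)
  moreover have "xs = ys"
    if "set xs = K \<and> distinct xs \<and> sorted_wrt R xs" "set ys = K \<and> distinct ys \<and> sorted_wrt R ys"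
    for xs ys
  proof (rule map_inj_on)
    show "map f xs = map f ys"
      using that sorted_iff[of xs] sorted_iff[of ys] by (intro strict_sorted_equal) simp_all
    show "inj_on f (set xs \<union> set ys)" using inj that by simp
  qed
  ultimately show ?thesis by blast
qed

definition list_partition :: "'a set \<Rightarrow> 'a set list \<Rightarrow> bool" where
  "list_partition S Ds \<longleftrightarrow> disjoint_family_on ((!) Ds) {..<length Ds} \<and>
     (\<forall>u<length Ds. Ds ! u \<noteq> {}) \<and> \<Union>(set Ds) = S"

definition block_index :: "'a set list \<Rightarrow> 'a \<Rightarrow> nat" where
  "block_index Ds i = (THE u. u < length Ds \<and> i \<in> Ds ! u)"

lemma ordered_partition_iff: "ordered_partition n \<omega> Ds \<longleftrightarrow> list_partition {1..n} Ds \<and> length Ds = \<omega>"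
  unfolding ordered_partition_def list_partition_def disjoint_family_on_def by auto

lemma list_partition_distinct: "list_partition S Ds \<Longrightarrow> distinct Ds"
  unfolding list_partition_def disjoint_family_on_def distinct_conv_nth by fastforce

lemma list_partition_subset: "list_partition S Ds \<Longrightarrow> u < length Ds \<Longrightarrow> Ds ! u \<subseteq> S"
  unfolding list_partition_def by auto

lemma block_index_eq:
  assumes "list_partition S Ds" and "u < length Ds" and "i \<in> Ds ! u"
  shows "block_index Ds i = u"
  unfolding block_index_def
  using assms unfolding list_partition_def disjoint_family_on_def by (intro the_equality) auto

lemma block_index:
  assumes "list_partition S Ds" and "i \<in> S"
  shows "block_index Ds i < length Ds" and "i \<in> Ds ! block_index Ds i"
proof -
  obtain u where "u < length Ds" "i \<in> Ds ! u"
    using assms unfolding list_partition_def by (auto simp: in_set_conv_nth)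
  then show "block_index Ds i < length Ds" "i \<in> Ds ! block_index Ds i"
    using block_index_eq[OF assms(1)] by auto
qed

lemma block_index_image:
  assumes "list_partition S Ds"
  shows "block_index Ds ` S = {..<length Ds}"
proof
  show "block_index Ds ` S \<subseteq> {..<length Ds}" using block_index(1)[OF assms] by auto
  show "{..<length Ds} \<subseteq> block_index Ds ` S"
  proof
    fix u assume "u \<in> {..<length Ds}"
    moreover obtain i where "i \<in> Ds ! u"
      using assms \<open>u \<in> {..<length Ds}\<close> unfolding list_partition_def by auto
    ultimately show "u \<in> block_index Ds ` S"
      using assms block_index_eq list_partition_subset by (metis image_eqI lessThan_iff subsetD)
  qed
qed

section \<open>The graph \<open>G\<^sub>1\<close> of a point\<close>

definition adj :: "real set \<Rightarrow> nat set \<Rightarrow> (nat \<Rightarrow> real) \<Rightarrow> nat \<Rightarrow> nat \<Rightarrow> bool" where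
  "adj A S x i j \<longleftrightarrow> i \<in> S \<and> j \<in> S \<and> i \<noteq> j \<and> \<bar>x i - x j\<bar> < a1 A"

abbreviation reach :: "real set \<Rightarrow> nat set \<Rightarrow> (nat \<Rightarrow> real) \<Rightarrow> nat \<Rightarrow> nat \<Rightarrow> bool" where
  "reach A S x \<equiv> (adj A S x)\<^sup>*\<^sup>*"

definition adj_class :: "real set \<Rightarrow> nat set \<Rightarrow> (nat \<Rightarrow> real) \<Rightarrow> nat \<Rightarrow> nat set" where
  "adj_class A S x i = {j \<in> S. reach A S x i j}"

definition adj_classes :: "real set \<Rightarrow> nat set \<Rightarrow> (nat \<Rightarrow> real) \<Rightarrow> nat set set" where
  "adj_classes A S x = adj_class A S x ` S"

definition far_below :: "real set \<Rightarrow> (nat \<Rightarrow> real) \<Rightarrow> nat set \<Rightarrow> nat set \<Rightarrow> bool" where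
  "far_below A x C D \<longleftrightarrow> (\<forall>i\<in>C. \<forall>j\<in>D. a1 A < x j - x i)"

definition sorted_classes :: "real set \<Rightarrow> nat set \<Rightarrow> (nat \<Rightarrow> real) \<Rightarrow> nat set list \<Rightarrow> bool" where
  "sorted_classes A S x Ds \<longleftrightarrow>
     set Ds = adj_classes A S x \<and> distinct Ds \<and> sorted_wrt (far_below A x) Ds"

lemma adj_sym: "adj A S x i j \<Longrightarrow> adj A S x j i"
  unfolding adj_def by auto

lemma reach_sym: "reach A S x i j \<Longrightarrow> reach A S x j i"
  by (induction rule: rtranclp_induct) (auto intro: converse_rtranclp_into_rtranclp adj_sym)

lemma reach_mem: "reach A S x i j \<Longrightarrow> i \<in> S \<Longrightarrow> j \<in> S"
  by (induction rule: rtranclp_induct) (auto simp: adj_def)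

lemma adj_class_self: "i \<in> S \<Longrightarrow> i \<in> adj_class A S x i"
  unfolding adj_class_def by simp

lemma adj_class_eq: "j \<in> adj_class A S x i \<Longrightarrow> adj_class A S x j = adj_class A S x i"
  unfolding adj_class_def by (auto intro: rtranclp_trans reach_sym)

lemma adj_classes_disjoint:
  "C \<in> adj_classes A S x \<Longrightarrow> D \<in> adj_classes A S x \<Longrightarrow> i \<in> C \<Longrightarrow> i \<in> D \<Longrightarrow> C = D"
  unfolding adj_classes_def using adj_class_eq by blast

lemma adj_classes_nonempty: "C \<in> adj_classes A S x \<Longrightarrow> C \<noteq> {}"
  unfolding adj_classes_def using adj_class_self by blast

lemma adj_classes_subset: "C \<in> adj_classes A S x \<Longrightarrow> C \<subseteq> S"
  unfolding adj_classes_def adj_class_def by auto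

lemma Union_adj_classes: "\<Union>(adj_classes A S x) = S"
  unfolding adj_classes_def adj_class_def by auto

lemma sorted_classes_partition: "sorted_classes A S x Ds \<Longrightarrow> list_partition S Ds"
  unfolding sorted_classes_def list_partition_def disjoint_family_on_def
  using adj_classes_disjoint adj_classes_nonempty Union_adj_classes
  by (metis (no_types, lifting) disjoint_iff nth_eq_iff_index_eq nth_mem lessThan_iff)

lemma sorted_classes_far:
  assumes "sorted_classes A S x Ds" "u < v" "v < length Ds" "i \<in> Ds ! u" "j \<in> Ds ! v"
  shows "a1 A < x j - x i"
  using assms unfolding sorted_classes_def sorted_wrt_iff_nth_less far_below_def by auto

locale arrangement =
  fixes A :: "real set"
  assumes finite_A: "finite A" and A_nonempty: "A \<noteq> {}" and A_pos: "\<forall>a\<in>A. 0 < a"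
begin

lemma a1_mem: "a1 A \<in> A"
  unfolding a1_def using finite_A A_nonempty by simp

lemma a1_pos: "0 < a1 A"
  using a1_mem A_pos by auto

lemma le_a1: "a \<in> A \<Longrightarrow> a \<le> a1 A"
  unfolding a1_def using finite_A by simp

lemma not_reach_far:
  assumes x: "x \<in> cmpl A S" and ij: "i \<in> S" "j \<in> S" "\<not> reach A S x i j"
  shows "a1 A < x j - x i \<or> a1 A < x i - x j"
proof -
  have "i \<noteq> j" "\<not> adj A S x i j" using ij by auto
  then have "a1 A \<le> \<bar>x i - x j\<bar>" using ij unfolding adj_def by auto
  moreover have "x i - x j \<noteq> a1 A" "x j - x i \<noteq> a1 A"
    using cmpl_neq[OF x] ij \<open>i \<noteq> j\<close> a1_mem by auto
  ultimately show ?thesis by linarith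
qed

text \<open>Moving along an edge changes a coordinate by less than \<open>a\<^sub>1\<close>, so it cannot cross to the
  other side of a point of another class, which lies at distance more than \<open>a\<^sub>1\<close>.\<close>

lemma far_along_reach:
  assumes x: "x \<in> cmpl A S" and reach: "reach A S x i i'" and j: "j \<in> S"
    and not_reach: "\<not> reach A S x i j"
  shows "(a1 A < x j - x i \<longrightarrow> a1 A < x j - x i') \<and> (a1 A < x i - x j \<longrightarrow> a1 A < x i' - x j)"
  using reach
proof (induction rule: rtranclp_induct)
  case base then show ?case by simp
next
  case (step m m')
  have "m' \<in> S" "\<bar>x m - x m'\<bar> < a1 A" using step(2) unfolding adj_def by auto
  moreover have "\<not> reach A S x m' j"
    using not_reach step(1,2) by (meson rtranclp.rtrancl_into_rtrancl rtranclp_trans)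
  ultimately have "a1 A < x j - x m' \<or> a1 A < x m' - x j"
    using not_reach_far[OF x _ j] by blast
  then show ?case using step(3) \<open>\<bar>x m - x m'\<bar> < a1 A\<close> by (auto simp: abs_less_iff)
qed

lemma far_below_adj_class:
  assumes x: "x \<in> cmpl A S" and ij: "i \<in> S" "j \<in> S" "\<not> reach A S x i j"
    and far: "a1 A < x j - x i"
  shows "far_below A x (adj_class A S x i) (adj_class A S x j)"
  unfolding far_below_def
proof (intro ballI)
  fix i' j' assume i': "i' \<in> adj_class A S x i" and j': "j' \<in> adj_class A S x j"
  then have reach: "reach A S x i i'" "reach A S x j j'" "i' \<in> S"
    unfolding adj_class_def by auto
  have "a1 A < x j - x i'" using far_along_reach[OF x reach(1) ij(2,3)] far by blast
  moreover have "\<not> reach A S x j i'"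
    using ij(3) reach(1) by (meson reach_sym rtranclp_trans)
  ultimately show "a1 A < x j' - x i'"
    using far_along_reach[OF x reach(2) reach(3)] by blast
qed

lemma adj_classes_total:
  assumes x: "x \<in> cmpl A S" and C: "C \<in> adj_classes A S x" and D: "D \<in> adj_classes A S x"
    and "C \<noteq> D"
  shows "far_below A x C D \<or> far_below A x D C"
proof -
  obtain i j where ij: "i \<in> S" "j \<in> S" and CD: "C = adj_class A S x i" "D = adj_class A S x j"
    using C D unfolding adj_classes_def by auto
  have not_reach: "\<not> reach A S x i j" "\<not> reach A S x j i"
    using \<open>C \<noteq> D\<close> adj_class_eq ij unfolding CD adj_class_def by (blast intro: reach_sym)+
  then show ?thesis
    using not_reach_far[OF x ij not_reach(1)] far_below_adj_class[OF x] ij unfolding CD by blast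
qed

lemma far_below_Min_less:
  assumes "far_below A x C D" and "finite C" "finite D" "C \<noteq> {}" "D \<noteq> {}"
  shows "Min (x ` C) < Min (x ` D)"
proof -
  have "Min (x ` D) \<in> x ` D" using assms by (intro Min_in) auto
  then obtain j where j: "j \<in> D" "Min (x ` D) = x j" by auto
  obtain i where i: "i \<in> C" using assms by auto
  then have "Min (x ` C) \<le> x i" using assms by simp
  moreover have "a1 A < x j - x i" using assms(1) i j unfolding far_below_def by auto
  ultimately show ?thesis using j a1_pos by simp
qed

text \<open>The classes are totally ordered by \<open>far_below\<close>, and the lowest coordinate of a class is a
  strictly monotone key for that order.\<close>

lemma ex1_sorted_classes:
  assumes "finite S" and "x \<in> cmpl A S"
  shows "\<exists>!Ds. sorted_classes A S x Ds"
proof -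
  have fin: "finite C" "C \<noteq> {}" if "C \<in> adj_classes A S x" for C
    using that assms(1) adj_classes_subset[OF that] adj_classes_nonempty by (auto intro: finite_subset)
  show ?thesis
    unfolding sorted_classes_def
    by (rule ex1_sorted_wrt_enumeration[where f = "\<lambda>C. Min (x ` C)"])
      (use assms adj_classes_total far_below_Min_less fin in \<open>auto simp: adj_classes_def\<close>)
qed

lemma adj_cell:
  assumes "y \<in> cell A S x" "x \<in> cmpl A S"
  shows "adj A S y = adj A S x"
proof (intro ext)
  fix i j
  have "\<bar>y i - y j\<bar> < a1 A \<longleftrightarrow> \<bar>x i - x j\<bar> < a1 A" if "i \<in> S" "j \<in> S" "i \<noteq> j"
  proof -
    have "y i - y j < a1 A \<longleftrightarrow> x i - x j < a1 A" "y j - y i < a1 A \<longleftrightarrow> x j - x i < a1 A"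
      using assms(1) that a1_mem unfolding cell_def by auto
    then show ?thesis by (auto simp: abs_less_iff)
  qed
  then show "adj A S y i j = adj A S x i j" unfolding adj_def by auto
qed

lemma far_below_cell:
  assumes x: "x \<in> cmpl A S" and "C \<subseteq> S" "D \<subseteq> S"
  shows "(\<forall>y\<in>cell A S x. far_below A y C D) \<longleftrightarrow> far_below A x C D"
proof
  show "\<forall>y\<in>cell A S x. far_below A y C D \<Longrightarrow> far_below A x C D"
    using cell_self[OF x] by blast
next
  assume far: "far_below A x C D"
  have "i \<noteq> j" if "i \<in> C" "j \<in> D" for i j
    using far that a1_pos unfolding far_below_def by force
  then show "\<forall>y\<in>cell A S x. far_below A y C D"
    using far cell_gt_iff[OF _ x] a1_mem assms(2,3) unfolding far_below_def by blast
qed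

lemma adj_classes_reach:
  "C \<in> adj_classes A S x \<Longrightarrow> i \<in> C \<Longrightarrow> j \<in> C \<Longrightarrow> reach A S x i j"
  unfolding adj_classes_def adj_class_def by (auto intro: rtranclp_trans reach_sym)

section \<open>The level of a region\<close>

lemma relpow_adj_spread:
  assumes "y \<in> cell A S x" "x \<in> cmpl A S"
  shows "(adj A S x ^^ n) i j \<Longrightarrow> \<bar>y i - y j\<bar> \<le> real n * a1 A"
proof (induction n arbitrary: j)
  case 0 then show ?case by simp
next
  case (Suc n)
  then obtain m where m: "(adj A S x ^^ n) i m" "adj A S y m j"
    using adj_cell[OF assms] by auto
  then have "\<bar>y m - y j\<bar> < a1 A" unfolding adj_def by auto
  then show ?case using Suc.IH[OF m(1)] by (simp add: algebra_simps)
qed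

lemma cell_spread_bounded:
  assumes "finite S" "x \<in> cmpl A S"
  shows "\<exists>B. \<forall>y\<in>cell A S x. \<forall>i\<in>S. \<forall>j\<in>S. reach A S x i j \<longrightarrow> \<bar>y i - y j\<bar> \<le> B"
proof -
  define N where "N = (\<lambda>(i, j). LEAST n. (adj A S x ^^ n) i j)"
  have "\<bar>y i - y j\<bar> \<le> real (\<Sum>p\<in>S \<times> S. N p) * a1 A"
    if "y \<in> cell A S x" "i \<in> S" "j \<in> S" "reach A S x i j" for y i j
  proof -
    have "(adj A S x ^^ N (i, j)) i j"
      using that(4) unfolding N_def rtranclp_power by (auto intro: LeastI_ex)
    then have "\<bar>y i - y j\<bar> \<le> real (N (i, j)) * a1 A"
      by (rule relpow_adj_spread[OF that(1) assms(2)])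
    also have "\<dots> \<le> real (\<Sum>p\<in>S \<times> S. N p) * a1 A"
      using that(2,3) assms(1) a1_pos by (intro mult_right_mono of_nat_mono member_le_sum) auto
    finally show ?thesis .
  qed
  then show ?thesis by blast
qed

text \<open>Differences within a block are unchanged, and a difference across blocks only moves
  further away from zero, so it stays beyond \<open>a\<^sub>1 \<ge> a\<close>.\<close>

lemma shift_blocks_in_cell:
  fixes g :: "nat \<Rightarrow> real"
  assumes x: "x \<in> cmpl A S" and mono: "mono g"
    and sep: "\<And>i j. i \<in> S \<Longrightarrow> j \<in> S \<Longrightarrow> p i < p j \<Longrightarrow> a1 A < x j - x i"
  shows "(\<lambda>i. if i \<in> S then x i + g (p i) else 0) \<in> cell A S x"
proof -
  let ?y = "\<lambda>i. if i \<in> S then x i + g (p i) else 0"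
  have "(?y i - ?y j < a \<longleftrightarrow> x i - x j < a) \<and> ?y i - ?y j \<noteq> a"
    if ij: "i \<in> S" "j \<in> S" "i \<noteq> j" and a: "a \<in> A" for i j a
  proof -
    have a_bounds: "0 < a" "a \<le> a1 A" using a A_pos le_a1 by auto
    have x_neq: "x i - x j \<noteq> a" using cmpl_neq[OF x ij a] .
    have y_diff: "?y i - ?y j = (x i - x j) + (g (p i) - g (p j))" using ij by simp
    consider "p i = p j" | "p i < p j" | "p j < p i" by linarith
    then show ?thesis
    proof cases
      case 1 then show ?thesis using y_diff x_neq by simp
    next
      case 2
      then have "g (p i) \<le> g (p j)" "a1 A < x j - x i" using monoD[OF mono] sep ij by auto
      then show ?thesis using y_diff a_bounds by auto
    next
      case 3
      then have "g (p j) \<le> g (p i)" "a1 A < x i - x j" using monoD[OF mono] sep ij by auto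
      then show ?thesis using y_diff a_bounds by auto
    qed
  qed
  moreover have "?y \<in> carrierS S" unfolding carrierS_def by simp
  ultimately show ?thesis unfolding cell_def cmpl_def by auto
qed

lemma level_cell:
  assumes fin: "finite S" and x: "x \<in> cmpl A S" and Ds: "sorted_classes A S x Ds"
  shows "level S (cell A S x) = length Ds"
proof -
  have part: "list_partition S Ds" using sorted_classes_partition[OF Ds] .
  let ?b = "block_index Ds"
  have classes: "Ds ! u \<in> adj_classes A S x" if "u < length Ds" for u
    using Ds nth_mem[OF that] unfolding sorted_classes_def by blast
  obtain B where B: "\<forall>y\<in>cell A S x. \<forall>i\<in>S. \<forall>j\<in>S. reach A S x i j \<longrightarrow> \<bar>y i - y j\<bar> \<le> B"
    using cell_spread_bounded[OF fin x] by blast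
  have "reach A S x i j" if "i \<in> S" "j \<in> S" "?b i = ?b j" for i j
    using adj_classes_reach[OF classes] block_index[OF part] that by metis
  then have spread: "\<forall>y\<in>cell A S x. \<forall>i\<in>S. \<forall>j\<in>S. ?b i = ?b j \<longrightarrow> \<bar>y i - y j\<bar> \<le> B"
    using B by blast
  have "(\<lambda>i. if i \<in> S then x i + (\<Sum>u<length Ds. t u * (if u \<le> ?b i then 1 else 0)) else 0)
      \<in> cell A S x" if t: "\<forall>u. 0 \<le> t u" for t
  proof (rule shift_blocks_in_cell[OF x])
    show "mono (\<lambda>b. \<Sum>u<length Ds. t u * (if u \<le> b then 1 else 0))"
      using t by (intro monoI sum_mono) auto
    show "a1 A < x j - x i" if "i \<in> S" "j \<in> S" "?b i < ?b j" for i j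
      using sorted_classes_far[OF Ds that(3)] block_index[OF part] that by blast
  qed
  then show ?thesis
    using level_eq_blocks[OF fin block_index_image[OF part] spread] by blast
qed

lemma adj_class_reach_restr:
  assumes C: "C \<in> adj_classes A S x" and i: "i \<in> C" and j: "j \<in> C"
  shows "reach A C (restr x C) i j"
proof -
  have C_eq: "C = adj_class A S x i"
    using C i adj_class_eq unfolding adj_classes_def by blast
  have "reach A S x i j" using adj_classes_reach[OF C i j] .
  then show ?thesis
  proof (induction rule: rtranclp_induct)
    case base then show ?case by simp
  next
    case (step m m')
    have "m \<in> C" "m' \<in> C"
      using step(1,2) reach_mem[OF step(1)] unfolding C_eq adj_class_def adj_def
      by (auto intro: rtranclp.rtrancl_into_rtrancl)
    then have "adj A C (restr x C) m m'" using step(2) unfolding adj_def restr_def by auto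
    then show ?case using step(3) by simp
  qed
qed

lemma level_adj_class_cell:
  assumes fin: "finite S" and x: "x \<in> cmpl A S" and C: "C \<in> adj_classes A S x"
  shows "level C (cell A C (restr x C)) = 1"
proof -
  have CS: "C \<subseteq> S" using adj_classes_subset[OF C] .
  have "adj_class A C (restr x C) i = C" if "i \<in> C" for i
    using adj_class_reach_restr[OF C that] unfolding adj_class_def by auto
  then have "adj_classes A C (restr x C) = {C}"
    using adj_classes_nonempty[OF C] unfolding adj_classes_def by auto
  then have "sorted_classes A C (restr x C) [C]" unfolding sorted_classes_def by simp
  then show ?thesis
    using level_cell[OF finite_subset[OF CS fin] restr_cmpl[OF x CS]] by simp
qed

lemma reach_of_level_one:
  assumes fin: "finite D" and y: "y \<in> cmpl A D" and level: "level D (cell A D y) = 1"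
    and ij: "i \<in> D" "j \<in> D"
  shows "reach A D y i j"
proof -
  obtain Ds where Ds: "sorted_classes A D y Ds" using ex1_sorted_classes[OF fin y] by blast
  then have "length Ds = 1" using level_cell[OF fin y] level by simp
  then have "adj_classes A D y = {Ds ! 0}"
    using Ds unfolding sorted_classes_def by (cases Ds) auto
  then show ?thesis
    using adj_classes_reach[of "Ds ! 0"] Union_adj_classes[of A D y] ij by auto
qed

section \<open>The map \<open>\<phi>\<close>\<close>

lemma G1_edge_cell:
  assumes x: "x \<in> cmpl A {1..n}"
  shows "G1_edge A n (cell A {1..n} x) = adj A {1..n} x"
proof (intro ext iffI)
  fix i j
  show "G1_edge A n (cell A {1..n} x) i j \<Longrightarrow> adj A {1..n} x i j"
    using cell_self[OF x] unfolding G1_edge_def adj_def by auto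
  assume "adj A {1..n} x i j"
  then have "adj A {1..n} y i j" if "y \<in> cell A {1..n} x" for y
    using adj_cell[OF that x] by simp
  then show "G1_edge A n (cell A {1..n} x) i j"
    using \<open>adj A {1..n} x i j\<close> unfolding G1_edge_def adj_def by auto
qed

lemma G1_components_cell:
  assumes "x \<in> cmpl A {1..n}"
  shows "G1_components A n (cell A {1..n} x) = adj_classes A {1..n} x"
  unfolding G1_components_def G1_edge_cell[OF assms] adj_classes_def adj_class_def by auto

lemma good_order_cell_iff:
  assumes x: "x \<in> cmpl A {1..n}"
  shows "good_order A n (cell A {1..n} x) Ds \<longleftrightarrow> sorted_classes A {1..n} x Ds"
proof -
  have "(\<forall>u v. u < v \<and> v < length Ds \<longrightarrow>
          (\<forall>i\<in>Ds ! u. \<forall>j\<in>Ds ! v. \<forall>y\<in>cell A {1..n} x. a1 A < y j - y i))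
        \<longleftrightarrow> sorted_wrt (far_below A x) Ds"
    if Ds: "set Ds = adj_classes A {1..n} x"
  proof -
    have sub: "Ds ! u \<subseteq> {1..n}" if "u < length Ds" for u
      using adj_classes_subset Ds nth_mem[OF that] by blast
    have "(\<forall>i\<in>Ds ! u. \<forall>j\<in>Ds ! v. \<forall>y\<in>cell A {1..n} x. a1 A < y j - y i)
        \<longleftrightarrow> far_below A x (Ds ! u) (Ds ! v)" if "u < v" "v < length Ds" for u v
      using far_below_cell[OF x sub[of u] sub[of v]] that unfolding far_below_def by auto
    then show ?thesis unfolding sorted_wrt_iff_nth_less by auto
  qed
  then show ?thesis
    unfolding good_order_def sorted_classes_def G1_components_cell[OF x]
    by (cases "set Ds = adj_classes A {1..n} x") simp_all
qed

lemma phi_cell: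
  assumes x: "x \<in> cmpl A {1..n}" and Ds: "sorted_classes A {1..n} x Ds"
  shows "phi A n (cell A {1..n} x) = (Ds, map (\<lambda>D. cell A D (restr x D)) Ds)"
proof -
  have "(THE Ds. good_order A n (cell A {1..n} x) Ds) = Ds"
    using ex1_sorted_classes[OF _ x] Ds unfolding good_order_cell_iff[OF x] by auto
  moreover have "connected_component_set (cmpl A D) (restr x' D) = cell A D (restr x D)"
    if x': "x' \<in> cell A {1..n} x" and D: "D \<in> set Ds" for x' D
  proof -
    have DS: "D \<subseteq> {1..n}" using Ds D adj_classes_subset unfolding sorted_classes_def by blast
    have "x' \<in> cmpl A {1..n}" using x' unfolding cell_def by simp
    then have "connected_component_set (cmpl A D) (restr x' D) = cell A D (restr x' D)"
      by (rule connected_component_cmpl[OF restr_cmpl[OF _ DS]])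
    also have "\<dots> = cell A D (restr x D)"
      by (rule cell_eq[OF restr_cell[OF x' DS]])
    finally show ?thesis .
  qed
  moreover have "(SOME x'. x' \<in> cell A {1..n} x) \<in> cell A {1..n} x"
    using cell_self[OF x] by (rule someI[of "\<lambda>x'. x' \<in> cell A {1..n} x"])
  ultimately show ?thesis unfolding phi_def Let_def by simp
qed

lemma regions_levelE:
  assumes "\<Omega> \<in> regions_level A {1..n} \<omega>"
  obtains x Ds where "x \<in> cmpl A {1..n}" "\<Omega> = cell A {1..n} x"
    "sorted_classes A {1..n} x Ds" "length Ds = \<omega>"
proof -
  obtain x where x: "x \<in> cmpl A {1..n}" "\<Omega> = cell A {1..n} x"
    using assms unfolding regions_level_def regions_eq_cells by auto
  obtain Ds where Ds: "sorted_classes A {1..n} x Ds" using ex1_sorted_classes[OF _ x(1)] by blast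
  then have "length Ds = \<omega>" using level_cell[OF _ x(1)] assms x(2) unfolding regions_level_def by auto
  then show ?thesis using that x Ds by blast
qed

lemma block_cell_level_one:
  assumes fin: "finite S" and x: "x \<in> cmpl A S" and Ds: "sorted_classes A S x Ds"
    and D: "D \<in> set Ds"
  shows "cell A D (restr x D) \<in> regions_level A D 1"
proof -
  have C: "D \<in> adj_classes A S x" using D Ds unfolding sorted_classes_def by auto
  then show ?thesis
    unfolding regions_level_def regions_eq_cells
    using restr_cmpl[OF x adj_classes_subset] level_adj_class_cell[OF fin x C] by blast
qed

lemma phi_region_level:
  assumes "\<Omega> \<in> regions_level A {1..n} \<omega>"
  shows "card (G1_components A n \<Omega>) = \<omega>"
    and "\<exists>!Ds. good_order A n \<Omega> Ds"
    and "\<forall>y\<in>\<Omega>. \<forall>j<\<omega>. restr y (fst (phi A n \<Omega>) ! j) \<in> snd (phi A n \<Omega>) ! j"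
    and "\<forall>j<\<omega>. snd (phi A n \<Omega>) ! j \<in> regions_level A (fst (phi A n \<Omega>) ! j) 1"
proof -
  obtain x Ds where x: "x \<in> cmpl A {1..n}" "\<Omega> = cell A {1..n} x"
    and Ds: "sorted_classes A {1..n} x Ds" "length Ds = \<omega>"
    using assms by (rule regions_levelE)
  have phi: "phi A n \<Omega> = (Ds, map (\<lambda>D. cell A D (restr x D)) Ds)"
    unfolding x(2) by (rule phi_cell[OF x(1) Ds(1)])
  have blocks: "Ds ! j \<in> set Ds" "Ds ! j \<subseteq> {1..n}" if "j < \<omega>" for j
    using Ds list_partition_subset[OF sorted_classes_partition] that by auto
  have "set Ds = adj_classes A {1..n} x" "distinct Ds" using Ds(1) unfolding sorted_classes_def by auto
  then show "card (G1_components A n \<Omega>) = \<omega>"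
    unfolding x(2) G1_components_cell[OF x(1)] using distinct_card Ds(2) by metis
  show "\<exists>!Ds. good_order A n \<Omega> Ds"
    unfolding x(2) good_order_cell_iff[OF x(1)] using ex1_sorted_classes[OF _ x(1)] by simp
  show "\<forall>y\<in>\<Omega>. \<forall>j<\<omega>. restr y (fst (phi A n \<Omega>) ! j) \<in> snd (phi A n \<Omega>) ! j"
    unfolding phi using restr_cell blocks Ds(2) x(2) by simp
  show "\<forall>j<\<omega>. snd (phi A n \<Omega>) ! j \<in> regions_level A (fst (phi A n \<Omega>) ! j) 1"
    unfolding phi using block_cell_level_one[OF _ x(1) Ds(1)] blocks Ds(2) by simp
qed

lemma phi_in_target:
  assumes "\<Omega> \<in> regions_level A {1..n} \<omega>"
  shows "phi A n \<Omega> \<in> target A n \<omega>"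
proof -
  obtain x Ds where x: "x \<in> cmpl A {1..n}" "\<Omega> = cell A {1..n} x"
    and Ds: "sorted_classes A {1..n} x Ds" "length Ds = \<omega>"
    using assms by (rule regions_levelE)
  have "ordered_partition n \<omega> Ds"
    using sorted_classes_partition[OF Ds(1)] Ds(2) by (simp add: ordered_partition_iff)
  moreover have "cell A (Ds ! j) (restr x (Ds ! j)) \<in> regions_level A (Ds ! j) 1" if "j < \<omega>" for j
    using block_cell_level_one[OF _ x(1) Ds(1)] that Ds(2) by simp
  ultimately show ?thesis
    unfolding target_def phi_cell[OF x(1) Ds(1)] x(2) using Ds(2) by simp
qed

lemma cell_eq_of_blocks:
  assumes y: "y \<in> cmpl A S"
    and Dx: "sorted_classes A S x Ds" and Dy: "sorted_classes A S y Ds"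
    and blocks: "\<And>D. D \<in> set Ds \<Longrightarrow> cell A D (restr x D) = cell A D (restr y D)"
  shows "cell A S x = cell A S y"
proof -
  have part: "list_partition S Ds" using sorted_classes_partition[OF Dx] .
  have "y i - y j < a \<longleftrightarrow> x i - x j < a"
    if ij: "i \<in> S" "j \<in> S" "i \<noteq> j" and a: "a \<in> A" for i j a
  proof -
    define u v where "u = block_index Ds i" and "v = block_index Ds j"
    have uv: "u < length Ds" "i \<in> Ds ! u" "v < length Ds" "j \<in> Ds ! v"
      using block_index[OF part] ij unfolding u_def v_def by auto
    have a_bounds: "0 < a" "a \<le> a1 A" using a A_pos le_a1 by auto
    consider "u = v" | "u < v" | "v < u" by linarith
    then show ?thesis
    proof cases
      case 1
      define D where "D = Ds ! u"
      have DS: "D \<subseteq> S" using list_partition_subset[OF part uv(1)] unfolding D_def .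
      have "restr y D \<in> cell A D (restr x D)"
        using blocks[of D] cell_self[OF restr_cmpl[OF y DS]] uv(1) unfolding D_def by simp
      then show ?thesis using uv 1 ij a unfolding D_def cell_def restr_def by auto
    next
      case 2
      then show ?thesis using sorted_classes_far[OF Dx] sorted_classes_far[OF Dy] uv a_bounds
        by (smt (verit))
    next
      case 3
      then show ?thesis using sorted_classes_far[OF Dx] sorted_classes_far[OF Dy] uv a_bounds
        by (smt (verit))
    qed
  qed
  then have "y \<in> cell A S x" using y unfolding cell_def by auto
  then show ?thesis by (rule cell_eq[symmetric])
qed

lemma inj_on_phi: "inj_on (phi A n) (regions_level A {1..n} \<omega>)"
proof (rule inj_onI)
  fix \<Omega> \<Omega>' assume \<Omega>: "\<Omega> \<in> regions_level A {1..n} \<omega>" and \<Omega>': "\<Omega>' \<in> regions_level A {1..n} \<omega>"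
    and eq: "phi A n \<Omega> = phi A n \<Omega>'"
  obtain x Ds where x: "x \<in> cmpl A {1..n}" "\<Omega> = cell A {1..n} x" "sorted_classes A {1..n} x Ds"
    using \<Omega> by (rule regions_levelE)
  obtain y Ds' where y: "y \<in> cmpl A {1..n}" "\<Omega>' = cell A {1..n} y" "sorted_classes A {1..n} y Ds'"
    using \<Omega>' by (rule regions_levelE)
  have "(Ds, map (\<lambda>D. cell A D (restr x D)) Ds) = (Ds', map (\<lambda>D. cell A D (restr y D)) Ds')"
    using eq unfolding x(2) y(2) phi_cell[OF x(1) x(3)] phi_cell[OF y(1) y(3)] .
  then have "Ds' = Ds" "\<forall>D\<in>set Ds. cell A D (restr x D) = cell A D (restr y D)"
    by (auto simp: map_eq_conv)
  then show "\<Omega> = \<Omega>'"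
    unfolding x(2) y(2) using cell_eq_of_blocks[OF y(1) x(3)] y(3) by simp
qed

lemma sorted_classes_of_separated:
  assumes part: "list_partition S Ds"
    and reach: "\<And>u i j. u < length Ds \<Longrightarrow> i \<in> Ds ! u \<Longrightarrow> j \<in> Ds ! u \<Longrightarrow> reach A S x i j"
    and far: "\<And>u v i j. u < v \<Longrightarrow> v < length Ds \<Longrightarrow> i \<in> Ds ! u \<Longrightarrow> j \<in> Ds ! v \<Longrightarrow>
      a1 A < x j - x i"
  shows "sorted_classes A S x Ds"
proof -
  let ?b = "block_index Ds"
  have adj_block: "?b j = ?b i" if "adj A S x i j" for i j
  proof (rule ccontr)
    have ij: "i \<in> S" "j \<in> S" "\<bar>x i - x j\<bar> < a1 A" using that unfolding adj_def by auto
    assume "?b j \<noteq> ?b i"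
    then consider "?b i < ?b j" | "?b j < ?b i" by linarith
    then show False
      by cases (use far[of "?b i" "?b j" i j] far[of "?b j" "?b i" j i] block_index[OF part] ij in auto)
  qed
  have reach_block: "?b j = ?b i" if "reach A S x i j" for i j
    using that by (induction rule: rtranclp_induct) (auto dest: adj_block)
  have class_eq: "adj_class A S x i = Ds ! ?b i" if i: "i \<in> S" for i
  proof
    show "adj_class A S x i \<subseteq> Ds ! ?b i"
      using reach_block block_index(2)[OF part] unfolding adj_class_def by fastforce
    show "Ds ! ?b i \<subseteq> adj_class A S x i"
      using reach[of "?b i" i] block_index[OF part i] list_partition_subset[OF part]
      unfolding adj_class_def by blast
  qed
  have "adj_classes A S x = (!) Ds ` ?b ` S"
    unfolding adj_classes_def image_image using class_eq by simp
  also have "\<dots> = set Ds"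
    unfolding block_index_image[OF part] by (auto simp: in_set_conv_nth)
  finally show ?thesis
    unfolding sorted_classes_def sorted_wrt_iff_nth_less far_below_def
    using list_partition_distinct[OF part] far by blast
qed

lemma cmpl_of_separated_blocks:
  assumes part: "list_partition S Ds" and carrier: "x \<in> carrierS S"
    and inside: "\<And>u i j a. u < length Ds \<Longrightarrow> i \<in> Ds ! u \<Longrightarrow> j \<in> Ds ! u \<Longrightarrow> i \<noteq> j \<Longrightarrow>
      a \<in> A \<Longrightarrow> x i - x j \<noteq> a"
    and far: "\<And>u v i j. u < v \<Longrightarrow> v < length Ds \<Longrightarrow> i \<in> Ds ! u \<Longrightarrow> j \<in> Ds ! v \<Longrightarrow>
      a1 A < x j - x i"
  shows "x \<in> cmpl A S"
proof -
  have "x i - x j \<noteq> a" if ij: "i \<in> S" "j \<in> S" "i \<noteq> j" and a: "a \<in> A" for i j a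
  proof -
    let ?b = "block_index Ds"
    have "?b i < length Ds" "i \<in> Ds ! ?b i" "?b j < length Ds" "j \<in> Ds ! ?b j"
      using block_index[OF part] ij by auto
    moreover have "0 < a" "a \<le> a1 A" using A_pos le_a1 a by auto
    ultimately show ?thesis
      using inside[of "?b i" i j a] far[of "?b i" "?b j" i j] far[of "?b j" "?b i" j i] ij a
      by (cases "?b i" "?b j" rule: linorder_cases) auto
  qed
  then show ?thesis using carrier unfolding cmpl_def by auto
qed

text \<open>The blocks are stacked far apart: the \<open>u\<close>-th block is lifted by \<open>u K\<close>, where \<open>K\<close>
  exceeds twice every coordinate plus \<open>a\<^sub>1\<close>, so distinct blocks end up more than \<open>a\<^sub>1\<close> apart.\<close>

lemma exists_stacked_point:
  assumes fin: "finite S" and part: "list_partition S Ds"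
    and Y: "\<And>u. u < length Ds \<Longrightarrow> Y u \<in> cmpl A (Ds ! u)"
    and Y_reach: "\<And>u i j. u < length Ds \<Longrightarrow> i \<in> Ds ! u \<Longrightarrow> j \<in> Ds ! u \<Longrightarrow>
      reach A (Ds ! u) (Y u) i j"
  obtains x where "x \<in> cmpl A S" "sorted_classes A S x Ds"
    "\<And>u. u < length Ds \<Longrightarrow> cell A (Ds ! u) (restr x (Ds ! u)) = cell A (Ds ! u) (Y u)"
proof -
  let ?b = "block_index Ds"
  have fin_block: "finite (Ds ! u)" if "u < length Ds" for u
    using finite_subset[OF list_partition_subset[OF part that] fin] .
  define T where "T = (\<Sum>u<length Ds. \<Sum>i\<in>Ds ! u. \<bar>Y u i\<bar>)"
  have T: "\<bar>Y u i\<bar> \<le> T" if "u < length Ds" "i \<in> Ds ! u" for u i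
  proof -
    have "\<bar>Y u i\<bar> \<le> (\<Sum>i\<in>Ds ! u. \<bar>Y u i\<bar>)"
      using that fin_block by (intro member_le_sum) auto
    also have "\<dots> \<le> T"
      unfolding T_def using that by (intro member_le_sum) (auto intro: sum_nonneg)
    finally show ?thesis .
  qed
  define K where "K = 2 * T + 2 * a1 A"
  define x where "x = (\<lambda>i. if i \<in> S then Y (?b i) i + real (?b i) * K else 0)"
  have x_block: "x i = Y u i + real u * K" if "u < length Ds" "i \<in> Ds ! u" for u i
    using that block_index_eq[OF part] list_partition_subset[OF part] unfolding x_def by auto
  have far: "a1 A < x j - x i"
    if "u < v" "v < length Ds" "i \<in> Ds ! u" "j \<in> Ds ! v" for u v i j
  proof -
    have "0 \<le> K" using T[of u i] that a1_pos unfolding K_def by linarith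
    then have "1 * K \<le> (real v - real u) * K"
      using that by (intro mult_right_mono) auto
    then show ?thesis
      using that x_block[of u i] x_block[of v j] T[of u i] T[of v j] a1_pos
      unfolding K_def abs_le_iff by (simp add: algebra_simps)
  qed
  have diff: "x i - x j = Y u i - Y u j" if "u < length Ds" "i \<in> Ds ! u" "j \<in> Ds ! u" for u i j
    using x_block that by simp
  have "x i - x j \<noteq> a"
    if "u < length Ds" "i \<in> Ds ! u" "j \<in> Ds ! u" "i \<noteq> j" "a \<in> A" for u i j a
    using diff[OF that(1-3)] cmpl_neq[OF Y that(2-5)] that(1) by simp
  then have x_cmpl: "x \<in> cmpl A S"
    using cmpl_of_separated_blocks[OF part _ _ far] unfolding x_def carrierS_def by simp
  have adj_le: "adj A (Ds ! u) (Y u) \<le> adj A S x" if "u < length Ds" for u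
    using diff[OF that] list_partition_subset[OF part that] unfolding adj_def by auto
  have "reach A S x i j" if "u < length Ds" "i \<in> Ds ! u" "j \<in> Ds ! u" for u i j
    by (rule predicate2D[OF rtranclp_mono[OF adj_le[OF that(1)]] Y_reach[OF that]])
  then have "sorted_classes A S x Ds"
    by (rule sorted_classes_of_separated[OF part _ far])
  moreover have "cell A (Ds ! u) (restr x (Ds ! u)) = cell A (Ds ! u) (Y u)" if "u < length Ds" for u
  proof -
    have "restr x (Ds ! u) \<in> cell A (Ds ! u) (Y u)"
      using Y[OF that] diff[OF that] unfolding cell_def cmpl_def carrierS_def restr_def by auto
    then show ?thesis by (rule cell_eq)
  qed
  ultimately show ?thesis using that x_cmpl by blast
qed

lemma target_subset_phi_image: "target A n \<omega> \<subseteq> phi A n ` regions_level A {1..n} \<omega>"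
proof
  fix p assume "p \<in> target A n \<omega>"
  then obtain Ds Rs where p: "p = (Ds, Rs)" and part: "list_partition {1..n} Ds"
    and len: "length Ds = \<omega>" "length Rs = \<omega>" and Rs: "\<forall>u<\<omega>. Rs ! u \<in> regions_level A (Ds ! u) 1"
    unfolding target_def ordered_partition_iff by auto
  have fin_block: "finite (Ds ! u)" if "u < \<omega>" for u
    using finite_subset[OF list_partition_subset[OF part] finite_atLeastAtMost] that len by auto
  have "\<forall>u\<in>{..<\<omega>}. \<exists>y. y \<in> cmpl A (Ds ! u) \<and> Rs ! u = cell A (Ds ! u) y"
    using Rs unfolding regions_level_def regions_eq_cells by auto
  then obtain Y where "\<forall>u\<in>{..<\<omega>}. Y u \<in> cmpl A (Ds ! u) \<and> Rs ! u = cell A (Ds ! u) (Y u)"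
    by (rule bchoice[THEN exE])
  then have Y: "\<And>u. u < \<omega> \<Longrightarrow> Y u \<in> cmpl A (Ds ! u) \<and> Rs ! u = cell A (Ds ! u) (Y u)"
    by simp
  have Y_reach: "reach A (Ds ! u) (Y u) i j" if "u < \<omega>" "i \<in> Ds ! u" "j \<in> Ds ! u" for u i j
    using reach_of_level_one[OF fin_block] Y Rs that unfolding regions_level_def by auto
  obtain x where x: "x \<in> cmpl A {1..n}" "sorted_classes A {1..n} x Ds"
    and cells: "\<And>u. u < \<omega> \<Longrightarrow> cell A (Ds ! u) (restr x (Ds ! u)) = cell A (Ds ! u) (Y u)"
    using exists_stacked_point[OF _ part, of Y] Y Y_reach len by auto
  have region: "cell A {1..n} x \<in> regions_level A {1..n} \<omega>"
    using x level_cell[OF _ x(1) x(2)] len unfolding regions_level_def regions_eq_cells by auto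
  have "map (\<lambda>D. cell A D (restr x D)) Ds = Rs"
    using cells Y len by (intro nth_equalityI) auto
  then show "p \<in> phi A n ` regions_level A {1..n} \<omega>"
    unfolding p using phi_cell[OF x] by (intro rev_image_eqI[OF region]) simp
qed

lemma bij_betw_phi: "bij_betw (phi A n) (regions_level A {1..n} \<omega>) (target A n \<omega>)"
  unfolding bij_betw_def using inj_on_phi phi_in_target target_subset_phi_image by blast

end

theorem lemma3p6:
  fixes A :: "real set" and n \<omega> :: nat
  assumes "finite A" and "A \<noteq> {}" and "\<forall>a\<in>A. a > 0"
    and "n \<ge> 1" and "\<omega> \<ge> 1"
  shows "(\<forall>\<Omega>\<in>regions_level A {1..n} \<omega>.
            card (G1_components A n \<Omega>) = \<omega> \<and>
            (\<exists>!Ds. good_order A n \<Omega> Ds) \<and>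
            (\<forall>x\<in>\<Omega>. \<forall>j<\<omega>. restr x (fst (phi A n \<Omega>) ! j) \<in> snd (phi A n \<Omega>) ! j) \<and>
            (\<forall>j<\<omega>. snd (phi A n \<Omega>) ! j \<in> regions_level A (fst (phi A n \<Omega>) ! j) 1))
         \<and> bij_betw (phi A n) (regions_level A {1..n} \<omega>) (target A n \<omega>)"
proof -
  interpret arrangement A using assms(1-3) by unfold_locales
  show ?thesis by (intro conjI ballI phi_region_level bij_betw_phi)
qed

end
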